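(* For a matrix $A\in SL_2\mathcal{V}$, the following are equivalent: (1) $A\neq1$ and $(A-1)^2=0$; (2) $A$ is conjugate (in $SL_2\mathcal{V}$) to $P_0=\begin{pmatrix}1&1\\0&1\end{pmatrix}$; (3) $A=\begin{pmatrix}1-ac^*&aa^*\\-cc^*&1+ca^*\end{pmatrix}$ for some $(a,c)\in S\mathbb{H}$.
   Context: For $q=a+bi+cj+dk\in\mathbb{H}$, $q^*=a+bi+cj-dk$, $\bar q=a-bi-cj-dk$. $\mathcal{V}=\mathrm{span}_\mathbb{R}\{1,i,j\}$. $S\mathbb{H}=\{(\xi,\eta)\in\mathbb{H}^2\setminus\{(0,0)\}:\xi\bar\eta\in\mathcal{V}\}$. $SL_2\mathcal{V}$ is the group of quaternionic matrices $\begin{pmatrix}a&b\\c&d\end{pmatrix}$ with $ab^*,cd^*,c^*a,d^*b,ba^*,dc^*,a^*c,b^*d\in\mathcal{V}$ and $ad^*-bc^*=da^*-cb^*=d^*a-b^*c=a^*d-c^*b=1$. *)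

theory Defs
  imports Main "HOL.Real"
begin

datatype quat = Quat (qre: real) (qi: real) (qj: real) (qk: real)

instantiation quat :: ring_1
begin
definition "0 = Quat 0 0 0 0"
definition "1 = Quat 1 0 0 0"
definition "p + q = Quat (qre p + qre q) (qi p + qi q) (qj p + qj q) (qk p + qk q)"
definition "p - q = Quat (qre p - qre q) (qi p - qi q) (qj p - qj q) (qk p - qk q)"
definition "- q = Quat (- qre q) (- qi q) (- qj q) (- qk q)"
definition "p * q = Quat
   (qre p * qre q - qi p * qi q - qj p * qj q - qk p * qk q)
   (qre p * qi q + qi p * qre q + qj p * qk q - qk p * qj q)
   (qre p * qj q - qi p * qk q + qj p * qre q + qk p * qi q)
   (qre p * qk q + qi p * qj q - qj p * qi q + qk p * qre q)"
instance
  by standard (auto simp: zero_quat_def one_quat_def plus_quat_def minus_quat_def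
      uminus_quat_def times_quat_def algebra_simps intro: quat.expand)
end

definition qstar :: "quat \<Rightarrow> quat" where
  "qstar q = Quat (qre q) (qi q) (qj q) (- qk q)"

definition qcnj :: "quat \<Rightarrow> quat" where
  "qcnj q = Quat (qre q) (- qi q) (- qj q) (- qk q)"

definition V :: "quat set" where
  "V = {q. qk q = 0}"

definition SH :: "(quat \<times> quat) set" where
  "SH = {(\<xi>, \<eta>). (\<xi>, \<eta>) \<noteq> (0, 0) \<and> \<xi> * qcnj \<eta> \<in> V}"

text \<open>M2 a b c d is the matrix ((a, b), (c, d)).\<close>
datatype mat2 = M2 quat quat quat quat

fun mmul :: "mat2 \<Rightarrow> mat2 \<Rightarrow> mat2" where
  "mmul (M2 a b c d) (M2 a' b' c' d') =
     M2 (a * a' + b * c') (a * b' + b * d') (c * a' + d * c') (c * b' + d * d')"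

fun msub :: "mat2 \<Rightarrow> mat2 \<Rightarrow> mat2" where
  "msub (M2 a b c d) (M2 a' b' c' d') = M2 (a - a') (b - b') (c - c') (d - d')"

definition mone :: mat2 where "mone = M2 1 0 0 1"
definition mzero :: mat2 where "mzero = M2 0 0 0 0"

definition P0 :: mat2 where "P0 = M2 1 1 0 1"

fun in_SL2V :: "mat2 \<Rightarrow> bool" where
  "in_SL2V (M2 a b c d) \<longleftrightarrow>
     a * qstar b \<in> V \<and> c * qstar d \<in> V \<and> qstar c * a \<in> V \<and> qstar d * b \<in> V \<and>
     b * qstar a \<in> V \<and> d * qstar c \<in> V \<and> qstar a * c \<in> V \<and> qstar b * d \<in> V \<and>
     a * qstar d - b * qstar c = 1 \<and> d * qstar a - c * qstar b = 1 \<and>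
     qstar d * a - qstar b * c = 1 \<and> qstar a * d - qstar c * b = 1"

definition SL2V :: "mat2 set" where
  "SL2V = {A. in_SL2V A}"

end

theory Submission
  imports Defs Complex_Main
begin

(* Conjugating P0 by g = [[a, b], [c, d]] in SL2V gives the matrix of (3) built from the first
   column (a, c) of g, and every pair in SH is the first column of some element of SL2V; this gives
   (3) <-> (2), while (2) -> (1) holds because conjugation preserves (1).
   For (1) -> (3), multiplying (A - 1)^2 = 0 by A^-1 = [[d*, -b*], [-c*, a*]] gives A + A^-1 = 2, so
   A = [[1 + alpha, q], [r, 1 - alpha*]] with q, r in V, alpha^2 + q r = 0 and alpha q = q alpha*.
   Every element of V has the form a a*.  If q = a a* is nonzero, c* = - a^-1 alpha works;
   if q = 0, then alpha = 0 and a = 0, c c* = - r works. *)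

lemma quat_eq_iff: "x = y \<longleftrightarrow> qre x = qre y \<and> qi x = qi y \<and> qj x = qj y \<and> qk x = qk y"
  by (cases x; cases y) auto

lemma quat_components [simp]:
  "qre 0 = 0" "qi 0 = 0" "qj 0 = 0" "qk 0 = 0"
  "qre 1 = 1" "qi 1 = 0" "qj 1 = 0" "qk 1 = 0"
  "qre (p + q) = qre p + qre q" "qi (p + q) = qi p + qi q" "qj (p + q) = qj p + qj q" "qk (p + q) = qk p + qk q"
  "qre (p - q) = qre p - qre q" "qi (p - q) = qi p - qi q" "qj (p - q) = qj p - qj q" "qk (p - q) = qk p - qk q"
  "qre (- q) = - qre q" "qi (- q) = - qi q" "qj (- q) = - qj q" "qk (- q) = - qk q"
  "qre (p * q) = qre p * qre q - qi p * qi q - qj p * qj q - qk p * qk q"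
  "qi (p * q) = qre p * qi q + qi p * qre q + qj p * qk q - qk p * qj q"
  "qj (p * q) = qre p * qj q - qi p * qk q + qj p * qre q + qk p * qi q"
  "qk (p * q) = qre p * qk q + qi p * qj q - qj p * qi q + qk p * qre q"
  "qre (qstar q) = qre q" "qi (qstar q) = qi q" "qj (qstar q) = qj q" "qk (qstar q) = - qk q"
  "qre (qcnj q) = qre q" "qi (qcnj q) = - qi q" "qj (qcnj q) = - qj q" "qk (qcnj q) = - qk q"
  by (simp_all add: zero_quat_def one_quat_def plus_quat_def minus_quat_def uminus_quat_def
      times_quat_def qstar_def qcnj_def)

definition qnorm2 :: "quat \<Rightarrow> real" where
  "qnorm2 q = qre q ^ 2 + qi q ^ 2 + qj q ^ 2 + qk q ^ 2"

lemma qnorm2_eq_0_iff: "qnorm2 q = 0 \<longleftrightarrow> q = 0"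
  by (auto simp: qnorm2_def quat_eq_iff add_nonneg_eq_0_iff)

instantiation quat :: division_ring
begin

definition "inverse q = Quat (qre q / qnorm2 q) (- qi q / qnorm2 q) (- qj q / qnorm2 q) (- qk q / qnorm2 q)"
definition "divide p q = p * inverse (q::quat)"

instance
proof
  have norm: "qnorm2 q \<noteq> 0" if "q \<noteq> 0" for q
    using that by (simp add: qnorm2_eq_0_iff)
  show "inverse q * q = 1" if "q \<noteq> 0" for q :: quat
    using norm[OF that] unfolding quat_eq_iff inverse_quat_def
    by (simp add: divide_simps) (simp add: qnorm2_def power2_eq_square algebra_simps)
  show "q * inverse q = 1" if "q \<noteq> 0" for q :: quat
    using norm[OF that] unfolding quat_eq_iff inverse_quat_def
    by (simp add: divide_simps) (simp add: qnorm2_def power2_eq_square algebra_simps)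
qed (simp_all add: divide_quat_def inverse_quat_def quat_eq_iff)

end

lemma qstar_mult: "qstar (x * y) = qstar y * qstar x"
  by (simp add: quat_eq_iff algebra_simps)

lemma qstar_qstar [simp]: "qstar (qstar x) = x"
  by (simp add: quat_eq_iff)

lemma qstar_diff: "qstar (x - y) = qstar x - qstar y"
  by (simp add: quat_eq_iff)

lemma qstar_minus: "qstar (- x) = - qstar x"
  by (simp add: quat_eq_iff)

lemma qstar_one [simp]: "qstar 1 = 1"
  by (simp add: quat_eq_iff)

lemma qstar_zero [simp]: "qstar 0 = 0"
  by (simp add: quat_eq_iff)

lemma qstar_inverse: "qstar (inverse x) = inverse (qstar x)"
  by (simp add: quat_eq_iff inverse_quat_def qnorm2_def)

lemma mem_V_iff: "x \<in> V \<longleftrightarrow> qstar x = x"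
  by (auto simp: V_def quat_eq_iff)

lemma uminus_mem_V_iff [simp]: "- x \<in> V \<longleftrightarrow> x \<in> V"
  by (auto simp: V_def)

lemma V_mult_qstar_swap: "x * qstar y \<in> V \<Longrightarrow> y * qstar x = x * qstar y"
  by (metis mem_V_iff qstar_mult qstar_qstar)

lemma V_qstar_mult_swap: "qstar x * y \<in> V \<Longrightarrow> qstar y * x = qstar x * y"
  by (metis mem_V_iff qstar_mult qstar_qstar)

lemma mem_SH_iff: "(a, c) \<in> SH \<longleftrightarrow> (a \<noteq> 0 \<or> c \<noteq> 0) \<and> qstar c * a \<in> V"
  by (auto simp: SH_def V_def algebra_simps)

lemma V_obtain_mult_qstar:
  assumes "q \<in> V"
  obtains a where "a * qstar a = q"
proof -
  obtain q0 q1 q2 where q: "q = Quat q0 q1 q2 0"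
    using assms by (cases q) (simp add: V_def)
  define S where "S = sqrt (q0\<^sup>2 + q1\<^sup>2 + q2\<^sup>2)"
  have S_sq: "S\<^sup>2 = q0\<^sup>2 + q1\<^sup>2 + q2\<^sup>2" and "S \<ge> \<bar>q0\<bar>"
    by (simp_all add: S_def real_le_rsqrt)
  show thesis
  proof (cases "S + q0 = 0")
    case True
    then have "q1\<^sup>2 + q2\<^sup>2 = 0" "q0 \<le> 0"
      using S_sq \<open>S \<ge> \<bar>q0\<bar>\<close> by (simp_all add: eq_neg_iff_add_eq_0[symmetric])
    then have "q1 = 0" "q2 = 0" "q0 \<le> 0"
      by (simp_all add: sum_power2_eq_zero_iff)
    then have "Quat 0 (sqrt (- q0)) 0 0 * qstar (Quat 0 (sqrt (- q0)) 0 0) = q"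
      by (simp add: quat_eq_iff q flip: power2_eq_square)
    then show thesis by (rule that)
  next
    case False
    then have "S + q0 > 0"
      using \<open>S \<ge> \<bar>q0\<bar>\<close> by simp
    \<comment> \<open>the root is \<open>(S + q) / t\<close>: as for complex square roots, \<open>(S + q)\<^sup>2 = t\<^sup>2 q\<close>,
      and \<open>qstar\<close> fixes \<open>S + q\<close>\<close>
    define t where "t = sqrt (2 * (S + q0))"
    have "t \<noteq> 0" "t\<^sup>2 = 2 * (S + q0)"
      using \<open>S + q0 > 0\<close> by (simp_all add: t_def)
    then have "Quat ((S + q0) / t) (q1 / t) (q2 / t) 0 * qstar (Quat ((S + q0) / t) (q1 / t) (q2 / t) 0) = q"
      by (simp add: quat_eq_iff q divide_simps) (use S_sq in algebra)
    then show thesis by (rule that)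
  qed
qed

lemma mmul_assoc: "mmul (mmul X Y) Z = mmul X (mmul Y Z)"
  by (cases X; cases Y; cases Z) (simp add: algebra_simps)

lemma mmul_msub_distrib_left: "mmul X (msub Y Z) = msub (mmul X Y) (mmul X Z)"
  by (cases X; cases Y; cases Z) (simp add: algebra_simps)

lemma mmul_msub_distrib_right: "mmul (msub Y Z) X = msub (mmul Y X) (mmul Z X)"
  by (cases X; cases Y; cases Z) (simp add: algebra_simps)

lemma mmul_mone_left [simp]: "mmul mone X = X"
  by (cases X) (simp add: mone_def)

lemma mmul_mone_right [simp]: "mmul X mone = X"
  by (cases X) (simp add: mone_def)

lemma mmul_mzero_left [simp]: "mmul mzero X = mzero"
  by (cases X) (simp add: mzero_def)

lemma mmul_mzero_right [simp]: "mmul X mzero = mzero"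
  by (cases X) (simp add: mzero_def)

lemma conj_msub_mone:
  "mmul B C = mone \<Longrightarrow> msub (mmul (mmul B P) C) mone = mmul (mmul B (msub P mone)) C"
  by (metis mmul_msub_distrib_left mmul_msub_distrib_right mmul_mone_right)

definition nontrivial_unipotent :: "mat2 \<Rightarrow> bool" where
  "nontrivial_unipotent A \<longleftrightarrow> A \<noteq> mone \<and> mmul (msub A mone) (msub A mone) = mzero"

lemma nontrivial_unipotent_P0: "nontrivial_unipotent P0"
  by (simp add: nontrivial_unipotent_def P0_def mone_def mzero_def)

lemma nontrivial_unipotent_conj:
  assumes "mmul B C = mone" "mmul C B = mone" "nontrivial_unipotent P"
  shows "nontrivial_unipotent (mmul (mmul B P) C)"
  unfolding nontrivial_unipotent_def
proof
  have "mmul (mmul C (mmul (mmul B P) C)) B = mmul (mmul C B) (mmul P (mmul C B))"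
    by (simp add: mmul_assoc)
  also have "\<dots> = P"
    using assms(2) by simp
  finally show "mmul (mmul B P) C \<noteq> mone"
    using assms(2,3) by (auto simp: nontrivial_unipotent_def)
  let ?N = "msub P mone"
  have "mmul (mmul (mmul B ?N) C) (mmul (mmul B ?N) C) = mmul (mmul B (mmul (mmul ?N (mmul C B)) ?N)) C"
    by (simp add: mmul_assoc)
  also have "\<dots> = mzero"
    using assms(2,3) by (simp add: nontrivial_unipotent_def)
  finally show "mmul (msub (mmul (mmul B P) C) mone) (msub (mmul (mmul B P) C) mone) = mzero"
    by (simp add: conj_msub_mone[OF assms(1)])
qed

fun minv :: "mat2 \<Rightarrow> mat2" where
  "minv (M2 a b c d) = M2 (qstar d) (- qstar b) (- qstar c) (qstar a)"

lemma SL2V_minv: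
  assumes "B \<in> SL2V"
  shows "minv B \<in> SL2V" "mmul B (minv B) = mone" "mmul (minv B) B = mone"
proof -
  obtain a b c d where B: "B = M2 a b c d" by (cases B)
  have h: "in_SL2V (M2 a b c d)" using assms B by (simp add: SL2V_def)
  show "minv B \<in> SL2V" using h B by (simp add: SL2V_def qstar_minus)
  show "mmul B (minv B) = mone" using h B V_mult_qstar_swap[of a b] V_mult_qstar_swap[of c d]
    by (simp add: mone_def)
  show "mmul (minv B) B = mone" using h B V_qstar_mult_swap[of d b] V_qstar_mult_swap[of c a]
    by (simp add: mone_def)
qed

definition SL2V_conjugate :: "mat2 \<Rightarrow> mat2 \<Rightarrow> bool" where
  "SL2V_conjugate A P \<longleftrightarrow>
     (\<exists>B C. B \<in> SL2V \<and> C \<in> SL2V \<and> mmul B C = mone \<and> mmul C B = mone \<and> A = mmul (mmul B P) C)"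

lemma SL2V_conjugate_by_minv:
  "B \<in> SL2V \<Longrightarrow> SL2V_conjugate (mmul (mmul B P) (minv B)) P"
  unfolding SL2V_conjugate_def using SL2V_minv by blast

definition parabolic :: "quat \<Rightarrow> quat \<Rightarrow> mat2" where
  "parabolic a c = M2 (1 - a * qstar c) (a * qstar a) (- (c * qstar c)) (1 + c * qstar a)"

lemma SL2V_conj_P0_eq_parabolic:
  assumes "in_SL2V (M2 a b c d)"
  shows "mmul (mmul (M2 a b c d) P0) (minv (M2 a b c d)) = parabolic a c"
proof -
  have "a * qstar d = 1 + b * qstar c" "d * qstar a = 1 + c * qstar b"
    "b * qstar a = a * qstar b" "d * qstar c = c * qstar d"
    using assms V_mult_qstar_swap[of a b] V_mult_qstar_swap[of c d] by (simp_all add: algebra_simps)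
  then show ?thesis
    by (simp add: P0_def parabolic_def algebra_simps)
qed

lemma SH_obtain_SL2V_column:
  assumes "(a, c) \<in> SH"
  obtains b d where "in_SL2V (M2 a b c d)"
proof -
  obtain a0 a1 a2 a3 where a: "a = Quat a0 a1 a2 a3" by (cases a)
  obtain c0 c1 c2 c3 where c: "c = Quat c0 c1 c2 c3" by (cases c)
  define n where "n = a0*a0 + a1*a1 + a2*a2 + a3*a3 + c0*c0 + c1*c1 + c2*c2 + c3*c3"
  have "a \<noteq> 0 \<or> c \<noteq> 0" and "qstar c * a \<in> V"
    using assms by (simp_all add: mem_SH_iff)
  then have n0: "n \<noteq> 0" and h: "a0*c3 + a1*c2 = a2*c1 + a3*c0"
    by (auto simp: n_def a c quat_eq_iff V_def add_nonneg_eq_0_iff algebra_simps)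
  \<comment> \<open>\<open>b = - k c k\<^sup>-\<^sup>1 / n\<close> and \<open>d = k a k\<^sup>-\<^sup>1 / n\<close>\<close>
  have "in_SL2V (M2 a (Quat (-c0/n) (c1/n) (c2/n) (-c3/n)) c (Quat (a0/n) (-a1/n) (-a2/n) (a3/n)))"
  proof -
    \<comment> \<open>after clearing denominators, this folds the sum of squares back into \<open>n\<close>\<close>
    have n_fold: "(a0*a0 + a1*a1 + a2*a2 + a3*a3 + c0*c0 + c1*c1 + c2*c2 + c3*c3) * (n * (n * n))
        = n * (n * (n * n))"
      by (simp only: n_def)
    show ?thesis
      using n0 h n_fold unfolding a c
      by (simp add: V_def quat_eq_iff field_simps, simp only: mult.assoc[symmetric] distrib_right[symmetric] h)
  qed
  then show thesis by (rule that)
qed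

lemma SL2V_conjugate_P0_parabolic:
  assumes "(a, c) \<in> SH"
  shows "SL2V_conjugate (parabolic a c) P0"
proof -
  obtain b d where B: "in_SL2V (M2 a b c d)"
    using SH_obtain_SL2V_column assms .
  then have "SL2V_conjugate (mmul (mmul (M2 a b c d) P0) (minv (M2 a b c d))) P0"
    by (intro SL2V_conjugate_by_minv) (simp add: SL2V_def)
  then show ?thesis
    by (simp only: SL2V_conj_P0_eq_parabolic[OF B])
qed

lemma unipotent_SL2V_shape:
  assumes "A \<in> SL2V" "mmul (msub A mone) (msub A mone) = mzero"
  obtains \<alpha> q r where "A = M2 (1 + \<alpha>) q r (1 - qstar \<alpha>)" "q \<in> V" "r \<in> V"
    "\<alpha> * \<alpha> + q * r = 0" "\<alpha> * q = q * qstar \<alpha>"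
proof -
  obtain p q r s where A: "A = M2 p q r s" by (cases A)
  \<comment> \<open>multiplying \<open>(A - 1)\<^sup>2 = 0\<close> by \<open>A\<^sup>-\<^sup>1\<close> gives \<open>A - 1 = 1 - A\<^sup>-\<^sup>1\<close>\<close>
  have inv_N: "mmul (minv A) (msub A mone) = msub mone (minv A)"
    using SL2V_minv[OF assms(1)] by (simp add: mmul_msub_distrib_left)
  have "mzero = mmul (mmul (minv A) (msub A mone)) (msub A mone)"
    using assms(2) by (simp add: mmul_assoc)
  also have "\<dots> = msub (msub A mone) (msub mone (minv A))"
    by (simp add: inv_N mmul_msub_distrib_right)
  finally have "msub (msub A mone) (msub mone (minv A)) = mzero" ..
  then have q: "q = qstar q" and r: "r = qstar r" and "s - 1 = 1 - qstar p"
    by (simp_all add: A mone_def mzero_def)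
  then have s: "s = 1 - qstar (p - 1)"
    by (simp add: qstar_diff diff_eq_eq)
  define \<alpha> where "\<alpha> = p - 1"
  have "msub A mone = M2 \<alpha> q r (- qstar \<alpha>)"
    by (simp add: A s \<alpha>_def mone_def)
  then have "\<alpha> * \<alpha> + q * r = 0" "\<alpha> * q + q * - qstar \<alpha> = 0"
    using assms(2) by (simp_all only: mmul.simps mzero_def mat2.inject)
  moreover have "A = M2 (1 + \<alpha>) q r (1 - qstar \<alpha>)"
    by (simp add: A s \<alpha>_def)
  ultimately show thesis
    using q r by (intro that) (simp_all add: mem_V_iff)
qed

lemma parabolic_of_nonzero_corner:
  assumes "q \<in> V" "q \<noteq> 0" "\<alpha> * \<alpha> + q * r = 0" "\<alpha> * q = q * qstar \<alpha>"
  obtains a c where "(a, c) \<in> SH" "parabolic a c = M2 (1 + \<alpha>) q r (1 - qstar \<alpha>)"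
proof -
  obtain a where a: "a * qstar a = q"
    using V_obtain_mult_qstar assms(1) .
  then have "a \<noteq> 0" "qstar a \<noteq> 0"
    using assms(2) by auto
  define c where "c = - (qstar \<alpha> * inverse (qstar a))"
  have c_star: "qstar c = - (inverse a * \<alpha>)"
    by (simp add: c_def qstar_minus qstar_mult qstar_inverse)
  have "1 - a * qstar c = 1 + \<alpha>"
    using \<open>a \<noteq> 0\<close> by (simp add: c_star mult.assoc[symmetric])
  moreover have "1 + c * qstar a = 1 - qstar \<alpha>"
    using \<open>qstar a \<noteq> 0\<close> by (simp add: c_def mult.assoc)
  moreover have "- (c * qstar c) = r"
  proof -
    have "inverse q * \<alpha> = qstar \<alpha> * inverse q"
      using assms(2,4) by (metis (no_types, lifting) mult.assoc left_inverse right_inverse mult_1_left mult_1_right)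
    have "c * qstar c = qstar \<alpha> * (inverse (qstar a) * inverse a) * \<alpha>"
      by (simp only: c_star) (simp add: c_def mult.assoc)
    also have "inverse (qstar a) * inverse a = inverse q"
      using \<open>a \<noteq> 0\<close> \<open>qstar a \<noteq> 0\<close> by (simp add: nonzero_inverse_mult_distrib flip: a)
    also have "qstar \<alpha> * inverse q * \<alpha> = inverse q * (\<alpha> * \<alpha>)"
      using \<open>inverse q * \<alpha> = qstar \<alpha> * inverse q\<close> by (simp add: mult.assoc[symmetric])
    also have "\<dots> = - r"
      using assms(2,3) by (simp add: eq_neg_iff_add_eq_0[symmetric] mult.assoc[symmetric])
    finally show ?thesis by simp
  qed
  moreover have "qstar c * a \<in> V"
  proof -
    have "inverse a * \<alpha> * a = inverse a * \<alpha> * a * qstar a * inverse (qstar a)"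
      using \<open>qstar a \<noteq> 0\<close> by (simp add: mult.assoc)
    also have "\<dots> = inverse a * (\<alpha> * q) * inverse (qstar a)"
      using a by (simp add: mult.assoc)
    also have "\<dots> = inverse a * (q * qstar \<alpha>) * inverse (qstar a)"
      using assms(4) by simp
    also have "\<dots> = qstar a * qstar \<alpha> * inverse (qstar a)"
      using \<open>a \<noteq> 0\<close> by (simp add: a[symmetric] mult.assoc[symmetric])
    finally have "qstar a * qstar \<alpha> * inverse (qstar a) = inverse a * \<alpha> * a" ..
    then show ?thesis
      by (simp add: mem_V_iff c_star qstar_minus qstar_mult qstar_inverse mult.assoc)
  qed
  ultimately show thesis
    using a \<open>a \<noteq> 0\<close> by (intro that[of a c]) (simp_all add: mem_SH_iff parabolic_def)
qed

lemma unipotent_SL2V_parabolic: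
  assumes "A \<in> SL2V" "nontrivial_unipotent A"
  obtains a c where "(a, c) \<in> SH" "A = parabolic a c"
proof -
  have "A \<noteq> mone" and square_zero: "mmul (msub A mone) (msub A mone) = mzero"
    using assms(2) by (simp_all add: nontrivial_unipotent_def)
  obtain \<alpha> q r where A: "A = M2 (1 + \<alpha>) q r (1 - qstar \<alpha>)" and "q \<in> V" "r \<in> V"
    and \<alpha>: "\<alpha> * \<alpha> + q * r = 0" "\<alpha> * q = q * qstar \<alpha>"
    using unipotent_SL2V_shape[OF assms(1) square_zero] .
  show thesis
  proof (cases "q = 0")
    case True
    then have "\<alpha> = 0"
      using \<alpha>(1) by simp
    then have "r \<noteq> 0"
      using A True \<open>A \<noteq> mone\<close> by (auto simp: mone_def)
    obtain c where "c * qstar c = - r"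
      using V_obtain_mult_qstar \<open>r \<in> V\<close> uminus_mem_V_iff by blast
    then have "(0, c) \<in> SH" "A = parabolic 0 c"
      using \<open>r \<noteq> 0\<close> by (auto simp: mem_SH_iff V_def A True \<open>\<alpha> = 0\<close> parabolic_def)
    then show thesis by (rule that)
  next
    case False
    then show thesis
      using parabolic_of_nonzero_corner \<open>q \<in> V\<close> \<alpha> A that by metis
  qed
qed

theorem lemma3p22:
  assumes "A \<in> SL2V"
  shows "((A \<noteq> mone \<and> mmul (msub A mone) (msub A mone) = mzero)
           \<longleftrightarrow> (\<exists>B C. B \<in> SL2V \<and> C \<in> SL2V \<and> mmul B C = mone \<and> mmul C B = mone \<and>
                      A = mmul (mmul B P0) C))
       \<and> ((\<exists>B C. B \<in> SL2V \<and> C \<in> SL2V \<and> mmul B C = mone \<and> mmul C B = mone \<and>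
                      A = mmul (mmul B P0) C)
           \<longleftrightarrow> (\<exists>a c. (a, c) \<in> SH \<and>
                  A = M2 (1 - a * qstar c) (a * qstar a) (- (c * qstar c)) (1 + c * qstar a)))"
proof -
  have "nontrivial_unipotent A" if "SL2V_conjugate A P0"
    using that nontrivial_unipotent_conj nontrivial_unipotent_P0 unfolding SL2V_conjugate_def by blast
  moreover have "\<exists>a c. (a, c) \<in> SH \<and> A = parabolic a c" if "nontrivial_unipotent A"
    using unipotent_SL2V_parabolic[OF assms that] by blast
  moreover have "SL2V_conjugate A P0" if "\<exists>a c. (a, c) \<in> SH \<and> A = parabolic a c"
    using that SL2V_conjugate_P0_parabolic by blast
  ultimately show ?thesis
    unfolding nontrivial_unipotent_def SL2V_conjugate_def parabolic_def by blast
qed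

end
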